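(* Let $k>8$ be an integer, $\theta=2\pi/k$, $G=(V,E)$ a unit disk graph, $Y_k=(V,E_Y)$ its Yao graph and $YS_k=(V,E_{YS})$ the output of the Sink step applied to $Y_k$. Let $\overrightarrow{uv}\in E_Y$ and let $w_0=v,w_1,\dots,w_h=u$ be vertices, all lying in $K_v(u)$, such that for each $i=1,\dots,h$: $\overrightarrow{w_iw_{i-1}}\in E_{YS}$, $w_i\in K_{w_{i-1}}(u)$, and $\mathrm{ID}(\overrightarrow{w_iw_{i-1}})\le\mathrm{ID}(\overrightarrow{uw_{i-1}})$. Then there exists $\ell\le h$ such that $|vw_\ell|\ge |uv|/(2\cos\theta)$ and $\sum_{i=0}^{\ell-1}|w_iw_{i+1}|\le \frac{|vw_\ell|}{\cos 2\theta}$.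
   Context: Unit disk graph: $V$ a finite point set in the plane, $E=\{uv:|uv|\le1\}$ with $|uv|$ Euclidean distance. Cones: at each point $x$ the plane is partitioned into $k$ half-open half-closed cones with apex $x$ of angle $\theta$, bounded by $k$ equally spaced rays (same directions at every node); $K_x(y)$ is the cone with apex $x$ containing $y$; $K_x$ an arbitrary such cone. Identifiers: nodes have distinct IDs; $\mathrm{ID}(\overrightarrow{xy})=(|xy|,\mathrm{ID}(x),\mathrm{ID}(y))$ compared lexicographically; $\mathrm{ID}(xy)=\min\{\mathrm{ID}(\overrightarrow{xy}),\mathrm{ID}(\overrightarrow{yx})\}$. Yao step: for each node $x$ and each cone $K_x$ containing the other endpoint of some edge of $E$ incident to $x$, add to $E_Y$ the directed edge $\overrightarrow{xy}$ where $xy$ is such an edge with lowest $\mathrm{ID}(xy)$. Sink step on $(V,E_Y)$: set $E_{YS}=\emptyset$. For each node $v$ and each cone $K_v$: let $I$ be the set of $x$ with $\overrightarrow{xv}\in E_Y$, $x\in K_v$; set $I(v)\leftarrow I$, $J\leftarrow(v)$ (ordered sequence), $T(v)\leftarrow\emptyset$. Repeat until $I$ is empty: remove the first vertex $x$ from $J$; for each cone $K_x$, let $w\in I(x)\cap K_x$ minimize $\mathrm{ID}(\overrightarrow{wx})$ (if any), add $\overrightarrow{wx}$ to $T(v)$, move $w$ from $I$ to $J$, set $I(w)\leftarrow I(x)\cap K_x$. Then add the directed edges of $T(v)$ to $E_{YS}$. *)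

theory Defs
  imports "HOL-Analysis.Analysis"
begin

(* Points of the plane are complex numbers; |xy| = dist x y.
   Cones: k half-open cones of angle 2*pi/k bounded by rays at angles
   alpha + j*2*pi/k (j = 0..k-1), same at every node. A point z <> x
   lies in cone number j of apex x iff the direction angle of z - x lies in
   [alpha + j*theta, alpha + (j+1)*theta) modulo 2*pi. *)

definition cone_idx :: "nat \<Rightarrow> real \<Rightarrow> complex \<Rightarrow> complex \<Rightarrow> nat" where
  "cone_idx k \<alpha> x z = nat \<lfloor>real k * frac ((Arg (z - x) - \<alpha>) / (2 * pi))\<rfloor>"

(* z lies in the cone K_x(y) (apex x excluded) *)
definition in_cone :: "nat \<Rightarrow> real \<Rightarrow> complex \<Rightarrow> complex \<Rightarrow> complex \<Rightarrow> bool" where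
  "in_cone k \<alpha> x y z \<longleftrightarrow> z \<noteq> x \<and> cone_idx k \<alpha> x z = cone_idx k \<alpha> x y"

definition cone :: "nat \<Rightarrow> real \<Rightarrow> complex \<Rightarrow> nat \<Rightarrow> complex set" where
  "cone k \<alpha> x j = {z. z \<noteq> x \<and> cone_idx k \<alpha> x z = j}"

definition udg :: "complex set \<Rightarrow> (complex \<times> complex) set" where
  "udg V = {(x, y). x \<in> V \<and> y \<in> V \<and> x \<noteq> y \<and> dist x y \<le> 1}"

definition dID :: "(complex \<Rightarrow> nat) \<Rightarrow> complex \<Rightarrow> complex \<Rightarrow> real \<times> nat \<times> nat" where
  "dID idf x y = (dist x y, idf x, idf y)"

definition lex_le :: "real \<times> nat \<times> nat \<Rightarrow> real \<times> nat \<times> nat \<Rightarrow> bool" where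
  "lex_le p q \<longleftrightarrow> fst p < fst q \<or> (fst p = fst q \<and>
     (fst (snd p) < fst (snd q) \<or> (fst (snd p) = fst (snd q) \<and> snd (snd p) \<le> snd (snd q))))"

definition uID :: "(complex \<Rightarrow> nat) \<Rightarrow> complex \<Rightarrow> complex \<Rightarrow> real \<times> nat \<times> nat" where
  "uID idf x y = (if lex_le (dID idf x y) (dID idf y x) then dID idf x y else dID idf y x)"

(* Yao step: directed edge (x,y) means x -> y *)
definition yao :: "nat \<Rightarrow> real \<Rightarrow> (complex \<Rightarrow> nat) \<Rightarrow> complex set \<Rightarrow> (complex \<times> complex) set" where
  "yao k \<alpha> idf V = {(x, y). (x, y) \<in> udg V \<and>
     (\<forall>z. (x, z) \<in> udg V \<and> in_cone k \<alpha> x y z \<longrightarrow> lex_le (uID idf x y) (uID idf x z))}"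

(* Sink step, tree T(v) for cone j of v.  sink_proc k alpha idf EY v j S x means:
   node x is (eventually) taken from J and processed, with I(x) = S. *)
inductive sink_proc :: "nat \<Rightarrow> real \<Rightarrow> (complex \<Rightarrow> nat) \<Rightarrow> (complex \<times> complex) set
    \<Rightarrow> complex \<Rightarrow> nat \<Rightarrow> complex set \<Rightarrow> complex \<Rightarrow> bool"
  for k \<alpha> idf EY v j where
  root: "sink_proc k \<alpha> idf EY v j {x. (x, v) \<in> EY \<and> x \<in> cone k \<alpha> v j} v"
| step: "sink_proc k \<alpha> idf EY v j S x \<Longrightarrow> j' < k \<Longrightarrow> w \<in> S \<inter> cone k \<alpha> x j' \<Longrightarrow>
         (\<forall>w' \<in> S \<inter> cone k \<alpha> x j'. lex_le (dID idf w x) (dID idf w' x)) \<Longrightarrow>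
         sink_proc k \<alpha> idf EY v j (S \<inter> cone k \<alpha> x j') w"

(* E_YS: all directed edges w -> x added to some T(v) *)
definition sink :: "nat \<Rightarrow> real \<Rightarrow> (complex \<Rightarrow> nat) \<Rightarrow> (complex \<times> complex) set \<Rightarrow> (complex \<times> complex) set" where
  "sink k \<alpha> idf EY = {(w, x). \<exists>v j S j'. j < k \<and> sink_proc k \<alpha> idf EY v j S x \<and> j' < k \<and>
      w \<in> S \<inter> cone k \<alpha> x j' \<and> (\<forall>w' \<in> S \<inter> cone k \<alpha> x j'. lex_le (dID idf w x) (dID idf w' x))}"

end

(* Let l be the first index with |v w_l| >= |uv| / (2 cos theta).  Every earlier w_i lies in
   the cone K_v(u) at distance less than |uv| / (2 cos theta) from v, so seen from w_i the point u
   lies in K_v(u) or in one of its two neighbouring cones.  The step from w_i to w_(i+1) stays in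
   K_(w_i)(u), hence deviates by at most 2 theta from the bisector of K_v(u).  Projecting the path
   w_0, ..., w_l onto that bisector gives cos (2 theta) * sum |w_i w_(i+1)| <= |v w_l|. *)

theory Submission
  imports Defs
begin

lemma floor_mult_frac_divide:
  assumes "k > 0"
  shows "\<lfloor>real k * frac (x / real k)\<rfloor> = \<lfloor>x\<rfloor> mod int k"
proof -
  have "real k * frac (x / real k) = x - of_int (int k * \<lfloor>x / real k\<rfloor>)"
    using assms by (simp add: frac_def field_simps)
  hence "\<lfloor>real k * frac (x / real k)\<rfloor> = \<lfloor>x\<rfloor> - int k * \<lfloor>x / real k\<rfloor>"
    by (metis floor_diff_of_int)
  also have "\<lfloor>x / real k\<rfloor> = \<lfloor>x\<rfloor> div int k"
    using floor_divide_real_eq_div[of "int k" x] by simp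
  finally show ?thesis by (simp add: minus_mult_div_eq_mod)
qed

lemma polar_form: "z = complex_of_real (cmod z) * cis (Arg z)"
  using rcis_cmod_Arg[of z] by (simp add: rcis_def)

lemma Arg_cis_mod_2pi: "\<exists>n::int. Arg (cis b) = b + 2 * pi * n"
proof -
  have "cis (Arg (cis b)) = cis b"
    using polar_form[of "cis b"] by simp
  hence "sin (Arg (cis b)) = sin b \<and> cos (Arg (cis b)) = cos b"
    by (metis cis.sel)
  thus ?thesis by (simp add: sin_cos_eq_iff)
qed

lemma cis_add_2pi_multiple: "cis (b + 2 * pi * of_int n) = cis b"
  by (simp flip: cis_mult)

lemma cone_idx_cis:
  assumes "k > 0" "\<rho> > 0" "y - x = complex_of_real \<rho> * cis b"
  shows "cone_idx k \<alpha> x y = nat (\<lfloor>(b - \<alpha>) / (2 * pi / real k)\<rfloor> mod int k)"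
proof -
  have "Arg (y - x) = Arg (cis b)" using assms(2,3) by (simp add: Arg_times_of_real)
  then obtain n :: int where n: "Arg (y - x) = b + 2 * pi * n" using Arg_cis_mod_2pi by metis
  have "(Arg (y - x) - \<alpha>) / (2 * pi) = ((b - \<alpha>) / (2 * pi / real k)) / real k + of_int n"
    using assms(1) by (simp add: n field_simps)
  hence "frac ((Arg (y - x) - \<alpha>) / (2 * pi)) = frac (((b - \<alpha>) / (2 * pi / real k)) / real k)"
    by simp
  thus ?thesis
    using floor_mult_frac_divide[OF assms(1), of "(b - \<alpha>) / (2 * pi / real k)"]
    unfolding cone_idx_def by simp
qed

lemma same_cone_sector:
  fixes k :: nat
  defines "\<theta> \<equiv> 2 * pi / real k"
  assumes "k > 0" "y \<noteq> x" "\<rho> > 0" "z - x = complex_of_real \<rho> * cis b"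
    and "cone_idx k \<alpha> x y = cone_idx k \<alpha> x z"
  obtains b' where "y - x = complex_of_real (dist x y) * cis b'"
    and "\<lfloor>(b' - \<alpha>) / \<theta>\<rfloor> = \<lfloor>(b - \<alpha>) / \<theta>\<rfloor>"
proof -
  define b0 where "b0 = Arg (y - x)"
  have y: "y - x = complex_of_real (dist x y) * cis b0"
    unfolding b0_def dist_norm norm_minus_commute[of x] by (rule polar_form)
  have "nat (\<lfloor>(b0 - \<alpha>) / \<theta>\<rfloor> mod int k) = nat (\<lfloor>(b - \<alpha>) / \<theta>\<rfloor> mod int k)"
    using assms(6) cone_idx_cis[OF assms(2) _ y] cone_idx_cis[OF assms(2,4,5)] assms(3)
    unfolding \<theta>_def by simp
  hence "\<lfloor>(b0 - \<alpha>) / \<theta>\<rfloor> mod int k = \<lfloor>(b - \<alpha>) / \<theta>\<rfloor> mod int k"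
    using assms(2) by (simp add: nat_eq_iff2)
  then obtain n where n: "\<lfloor>(b - \<alpha>) / \<theta>\<rfloor> - \<lfloor>(b0 - \<alpha>) / \<theta>\<rfloor> = int k * n"
    by (metis dvd_def mod_eq_dvd_iff)
  have "(b0 + 2 * pi * of_int n - \<alpha>) / \<theta> = (b0 - \<alpha>) / \<theta> + of_int (int k * n)"
    using assms(2) unfolding \<theta>_def by (simp add: field_simps)
  hence "\<lfloor>(b0 + 2 * pi * of_int n - \<alpha>) / \<theta>\<rfloor> = \<lfloor>(b - \<alpha>) / \<theta>\<rfloor>"
    using n by (metis floor_add_int add_diff_cancel_left' diff_add_cancel)
  with y show ?thesis by (intro that[of "b0 + 2 * pi * of_int n"]) (simp_all add: cis_add_2pi_multiple)
qed

lemma Im_of_real_cis_mult_cis: "Im (complex_of_real R * cis p * cis t) = R * sin (p + t)"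
  by (simp add: mult.assoc cis_mult)

lemma Re_of_real_cis_mult_cis: "Re (complex_of_real R * cis p * cis t) = R * cos (p + t)"
  by (simp add: mult.assoc cis_mult)

lemma Arg_sector_diff:
  assumes "0 < \<theta>" "\<theta> \<le> pi / 4" "0 \<le> r" "r * (2 * cos \<theta>) < R"
    and "0 \<le> p" "p < \<theta>" "0 \<le> s" "s < \<theta>"
  defines "z \<equiv> complex_of_real R * cis p - complex_of_real r * cis s"
  shows "z \<noteq> 0" "- \<theta> < Arg z" "Arg z < 2 * \<theta>"
proof -
  have sin_pos: "sin \<theta> > 0" and cos_pos: "cos \<theta> > 0"
    using assms(1,2) by (auto intro!: sin_gt_zero cos_gt_zero)
  have "0 \<le> r * (2 * cos \<theta>)" using assms(3) cos_pos by simp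
  hence R_pos: "R > 0" using assms(4) by linarith
  have "r * sin (2 * \<theta>) = r * (2 * cos \<theta>) * sin \<theta>" by (simp add: sin_double)
  also have "\<dots> < R * sin \<theta>" using assms(4) sin_pos by (rule mult_strict_right_mono)
  finally have key: "r * sin (2 * \<theta>) < R * sin \<theta>" .
  txt \<open>Rotating z by \<open>\<theta>\<close> resp. \<open>-2\<theta>\<close> puts it strictly above resp. below the real axis.\<close>
  have "sin \<theta> \<le> sin (p + \<theta>)" "sin (s + \<theta>) \<le> sin (2 * \<theta>)"
    using assms by (intro sin_monotone_2pi_le; simp)+
  hence "r * sin (s + \<theta>) \<le> r * sin (2 * \<theta>)" "R * sin \<theta> \<le> R * sin (p + \<theta>)"
    using assms(3) R_pos by (simp_all add: mult_left_mono)
  hence "r * sin (s + \<theta>) < R * sin (p + \<theta>)"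
    using key by linarith
  hence above: "Im (z * cis \<theta>) > 0"
    unfolding z_def by (simp only: left_diff_distrib minus_complex.sel Im_of_real_cis_mult_cis)
  have "sin (p - 2 * \<theta>) \<le> sin (- \<theta>)" "sin (- (2 * \<theta>)) \<le> sin (s - 2 * \<theta>)"
    using assms by (intro sin_monotone_2pi_le; simp)+
  hence "R * sin (p - 2 * \<theta>) \<le> - (R * sin \<theta>)" "- (r * sin (2 * \<theta>)) \<le> r * sin (s - 2 * \<theta>)"
    using assms(3) R_pos mult_left_mono by fastforce+
  hence "R * sin (p - 2 * \<theta>) < r * sin (s - 2 * \<theta>)"
    using key by linarith
  hence below: "Im (z * cis (- 2 * \<theta>)) < 0"
    unfolding z_def by (simp only: left_diff_distrib minus_complex.sel Im_of_real_cis_mult_cis) simp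
  show "z \<noteq> 0" using above by auto
  hence norm_pos: "cmod z > 0" by simp
  have Arg_bounds: "- pi < Arg z" "Arg z \<le> pi" using Arg_bounded by auto
  have "Im (z * cis \<theta>) = cmod z * sin (Arg z + \<theta>)"
    by (subst polar_form) (rule Im_of_real_cis_mult_cis)
  hence "sin (Arg z + \<theta>) > 0" using above norm_pos by (simp add: zero_less_mult_iff)
  hence "sin (- (Arg z + \<theta>)) < 0" by (simp only: sin_minus neg_less_0_iff_less)
  thus "- \<theta> < Arg z"
    using Arg_bounds assms(1,2) sin_ge_zero[of "- (Arg z + \<theta>)"] by (cases "- \<theta> < Arg z") auto
  have "Im (z * cis (- 2 * \<theta>)) = cmod z * sin (Arg z + - 2 * \<theta>)"
    by (subst polar_form) (rule Im_of_real_cis_mult_cis)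
  hence "sin (Arg z - 2 * \<theta>) < 0" using below norm_pos by (simp add: mult_less_0_iff)
  thus "Arg z < 2 * \<theta>"
    using Arg_bounds assms(1,2) sin_ge_zero[of "Arg z - 2 * \<theta>"] by (cases "Arg z < 2 * \<theta>") auto
qed

lemma floor_divide_pos_eq_iff:
  assumes "\<theta> > 0"
  shows "\<lfloor>x / \<theta>\<rfloor> = j \<longleftrightarrow> of_int j * \<theta> \<le> x \<and> x < (of_int j + 1) * \<theta>"
  using assms by (simp add: floor_eq_iff pos_le_divide_eq pos_divide_less_eq)

lemma sector_seen_from_near_point:
  assumes "0 < \<theta>" "\<theta> \<le> pi / 4"
    and "u - v = complex_of_real D * cis bu" "x - v = complex_of_real r * cis bx"
    and "0 \<le> r" "r * (2 * cos \<theta>) < D"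
    and "\<lfloor>(bu - \<alpha>) / \<theta>\<rfloor> = j" "\<lfloor>(bx - \<alpha>) / \<theta>\<rfloor> = j"
  obtains \<rho> b where "\<rho> > 0" "u - x = complex_of_real \<rho> * cis b"
    and "j - 1 \<le> \<lfloor>(b - \<alpha>) / \<theta>\<rfloor>" "\<lfloor>(b - \<alpha>) / \<theta>\<rfloor> \<le> j + 1"
proof -
  define \<beta> where "\<beta> = \<alpha> + of_int j * \<theta>"
  have offsets: "0 \<le> bu - \<beta>" "bu - \<beta> < \<theta>" "0 \<le> bx - \<beta>" "bx - \<beta> < \<theta>"
    using assms(7,8) unfolding floor_divide_pos_eq_iff[OF assms(1)] \<beta>_def
    by (simp_all add: algebra_simps)
  define z where "z = complex_of_real D * cis (bu - \<beta>) - complex_of_real r * cis (bx - \<beta>)"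
  note z = Arg_sector_diff[OF assms(1,2,5,6) offsets, folded z_def]
  have "u - x = (u - v) - (x - v)" by simp
  also have "\<dots> = cis \<beta> * z"
  proof -
    have rotate: "cis \<beta> * (c * cis (b - \<beta>)) = c * cis b" for c b
      by (simp add: mult.left_commute cis_mult)
    show ?thesis unfolding assms(3,4) z_def by (simp add: right_diff_distrib rotate)
  qed
  also have "\<dots> = complex_of_real (cmod z) * cis (\<beta> + Arg z)"
    by (subst polar_form[of z]) (simp add: cis_mult algebra_simps)
  finally have u: "u - x = complex_of_real (cmod z) * cis (\<beta> + Arg z)" .
  have "(\<beta> + Arg z - \<alpha>) / \<theta> = of_int j + Arg z / \<theta>"
    unfolding \<beta>_def using assms(1) by (simp add: field_simps)
  moreover have "-1 < Arg z / \<theta>" "Arg z / \<theta> < 2"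
    using z assms(1) by (simp_all add: pos_less_divide_eq pos_divide_less_eq)
  ultimately show ?thesis
    using z u by (intro that[of "cmod z" "\<beta> + Arg z"]) (simp_all add: le_floor_iff floor_le_iff)
qed

lemma in_cone_projection_lower_bound:
  fixes k :: nat
  defines "\<theta> \<equiv> 2 * pi / real k"
  assumes "k \<ge> 8" "\<rho> > 0" "u - x = complex_of_real \<rho> * cis b"
    and "j - 1 \<le> \<lfloor>(b - \<alpha>) / \<theta>\<rfloor>" "\<lfloor>(b - \<alpha>) / \<theta>\<rfloor> \<le> j + 1"
    and "in_cone k \<alpha> x u y"
  shows "cos (2 * \<theta>) * dist x y \<le> Re ((y - x) * cis (- (\<alpha> + (of_int j + 1 / 2) * \<theta>)))"
proof -
  define c where "c = \<alpha> + (of_int j + 1 / 2) * \<theta>"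
  define m where "m = \<lfloor>(b - \<alpha>) / \<theta>\<rfloor>"
  have \<theta>: "0 < \<theta>" "\<theta> \<le> pi / 4"
    using assms(2) unfolding \<theta>_def by (simp_all add: field_simps)
  from assms(7) have "y \<noteq> x" "cone_idx k \<alpha> x y = cone_idx k \<alpha> x u"
    unfolding in_cone_def by auto
  then obtain b' where y: "y - x = complex_of_real (dist x y) * cis b'"
    and "\<lfloor>(b' - \<alpha>) / \<theta>\<rfloor> = m"
    using same_cone_sector[of k y x \<rho> u b \<alpha>] assms(2,3,4) unfolding \<theta>_def m_def by auto
  hence "of_int m * \<theta> \<le> b' - \<alpha>" "b' - \<alpha> < (of_int m + 1) * \<theta>"
    using floor_divide_pos_eq_iff[OF \<theta>(1)] by blast+
  moreover have "(of_int j - 1) * \<theta> \<le> of_int m * \<theta>" "(of_int m + 1) * \<theta> \<le> (of_int j + 2) * \<theta>"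
    using assms(5,6) \<theta>(1) unfolding m_def by (intro mult_right_mono; simp)+
  ultimately have "\<bar>b' - c\<bar> \<le> 2 * \<theta>"
    unfolding c_def by (simp add: abs_le_iff algebra_simps)
  hence "cos (2 * \<theta>) \<le> cos (b' - c)"
    using cos_monotone_0_pi_le[of "\<bar>b' - c\<bar>" "2 * \<theta>"] \<theta> by simp
  moreover have "Re ((y - x) * cis (- c)) = dist x y * cos (b' - c)"
    unfolding y Re_of_real_cis_mult_cis by simp
  ultimately show ?thesis
    unfolding c_def[symmetric] by (simp add: mult.commute mult_left_mono)
qed

lemma path_length_le_projection:
  fixes w :: "nat \<Rightarrow> complex"
  assumes "a > 0"
    and "\<And>i. i < l \<Longrightarrow> a * dist (w i) (w (Suc i)) \<le> Re ((w (Suc i) - w i) * cis c)"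
  shows "(\<Sum>i<l. dist (w i) (w (Suc i))) \<le> dist (w 0) (w l) / a"
proof -
  have "a * (\<Sum>i<l. dist (w i) (w (Suc i))) = (\<Sum>i<l. a * dist (w i) (w (Suc i)))"
    by (simp add: sum_distrib_left)
  also have "\<dots> \<le> (\<Sum>i<l. Re ((w (Suc i) - w i) * cis c))"
    by (rule sum_mono) (use assms(2) in simp)
  also have "\<dots> = Re ((\<Sum>i<l. w (Suc i) - w i) * cis c)"
    by (simp add: sum_distrib_right)
  also have "\<dots> = Re ((w l - w 0) * cis c)"
    by (simp add: sum_lessThan_telescope)
  also have "\<dots> \<le> cmod ((w l - w 0) * cis c)" by (rule complex_Re_le_cmod)
  also have "\<dots> = dist (w 0) (w l)" by (simp add: norm_mult dist_norm norm_minus_commute)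
  finally show ?thesis using assms(1) by (simp add: pos_le_divide_eq mult.commute)
qed

lemma cone_path_length_bound:
  fixes k :: nat and w :: "nat \<Rightarrow> complex"
  defines "\<theta> \<equiv> 2 * pi / real k"
  assumes "k > 8" "w 0 = v"
    and "\<And>i. 0 < i \<Longrightarrow> i < l \<Longrightarrow> in_cone k \<alpha> v u (w i)"
    and "\<And>i. i < l \<Longrightarrow> in_cone k \<alpha> (w i) u (w (Suc i))"
    and "\<And>i. i < l \<Longrightarrow> dist v (w i) * (2 * cos \<theta>) < dist u v"
  shows "(\<Sum>i<l. dist (w i) (w (Suc i))) \<le> dist v (w l) / cos (2 * \<theta>)"
proof -
  have \<theta>: "0 < \<theta>" "\<theta> < pi / 4"
    using assms(2) unfolding \<theta>_def by (simp_all add: field_simps)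
  define bu where "bu = Arg (u - v)"
  have u: "u - v = complex_of_real (dist u v) * cis bu"
    unfolding bu_def dist_norm by (rule polar_form)
  define j where "j = \<lfloor>(bu - \<alpha>) / \<theta>\<rfloor>"
  \<comment> \<open>\<open>\<alpha> + (j + 1/2) \<theta>\<close> is the direction of the bisector of the cone \<open>K\<^sub>v(u)\<close>.\<close>
  have "cos (2 * \<theta>) * dist (w i) (w (Suc i))
          \<le> Re ((w (Suc i) - w i) * cis (- (\<alpha> + (of_int j + 1 / 2) * \<theta>)))"
    if i_lt: "i < l" for i
  proof -
    have "dist u v > 0" using assms(6)[of 0] i_lt assms(3) by simp
    obtain r bx where x: "w i - v = complex_of_real r * cis bx" and "0 \<le> r"
      and "r * (2 * cos \<theta>) < dist u v" and "\<lfloor>(bx - \<alpha>) / \<theta>\<rfloor> = j"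
    proof (cases "i = 0")
      case True
      with \<open>dist u v > 0\<close> show ?thesis using assms(3) j_def by (intro that[of 0 bu]) simp_all
    next
      case False
      hence "w i \<noteq> v" "cone_idx k \<alpha> v (w i) = cone_idx k \<alpha> v u"
        using assms(4)[of i] i_lt unfolding in_cone_def by auto
      with \<open>dist u v > 0\<close> obtain bx where "w i - v = complex_of_real (dist v (w i)) * cis bx"
        and "\<lfloor>(bx - \<alpha>) / \<theta>\<rfloor> = j"
        using same_cone_sector[of k "w i" v "dist u v" u bu \<alpha>] assms(2) u
        unfolding \<theta>_def j_def by auto
      thus ?thesis using assms(6)[OF i_lt] by (intro that) simp_all
    qed
    then obtain \<rho> b where "\<rho> > 0" "u - w i = complex_of_real \<rho> * cis b"
      and "j - 1 \<le> \<lfloor>(b - \<alpha>) / \<theta>\<rfloor>" "\<lfloor>(b - \<alpha>) / \<theta>\<rfloor> \<le> j + 1"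
      using sector_seen_from_near_point[OF \<theta>(1) less_imp_le[OF \<theta>(2)] u x] j_def by metis
    thus ?thesis
      using in_cone_projection_lower_bound[OF less_imp_le[OF assms(2)]] assms(5)[OF i_lt]
      unfolding \<theta>_def by blast
  qed
  moreover have "cos (2 * \<theta>) > 0" using \<theta> by (intro cos_gt_zero) auto
  ultimately show ?thesis
    using path_length_le_projection[of "cos (2 * \<theta>)" l w] assms(3) by blast
qed

theorem lemma3:
  fixes k :: nat and \<alpha> :: real and idf :: "complex \<Rightarrow> nat" and V :: "complex set"
    and u v :: complex and w :: "nat \<Rightarrow> complex" and h :: nat
  defines "\<theta> \<equiv> 2 * pi / real k"
  defines "EY \<equiv> yao k \<alpha> idf V"
  defines "EYS \<equiv> sink k \<alpha> idf EY"
  assumes "k > 8"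
    and "finite V" and "inj_on idf V"
    and "(u, v) \<in> EY"
    and "w 0 = v" and "w h = u"
    and "\<forall>i \<le> h. w i \<in> V"
    and "\<forall>i \<in> {1..h}. in_cone k \<alpha> v u (w i)"
    and "\<forall>i \<in> {1..h}. (w i, w (i - 1)) \<in> EYS"
    and "\<forall>i \<in> {1..h}. in_cone k \<alpha> (w (i - 1)) u (w i)"
    and "\<forall>i \<in> {1..h}. lex_le (dID idf (w i) (w (i - 1))) (dID idf u (w (i - 1)))"
  shows "\<exists>l \<le> h. dist v (w l) \<ge> dist u v / (2 * cos \<theta>) \<and>
           (\<Sum>i<l. dist (w i) (w (Suc i))) \<le> dist v (w l) / cos (2 * \<theta>)"
proof -
  have "cos (pi / 3) \<le> cos \<theta>"
    using assms(4) unfolding \<theta>_def by (intro cos_monotone_0_pi_le) (simp_all add: field_simps)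
  hence cos_\<theta>: "1 \<le> 2 * cos \<theta>" by (simp add: cos_60)
  define far where "far l \<longleftrightarrow> dist u v / (2 * cos \<theta>) \<le> dist v (w l)" for l
  have "far h"
    using cos_\<theta> assms(9) unfolding far_def
    by (simp add: pos_divide_le_eq dist_commute mult_le_cancel_left1)
  then obtain l where "l \<le> h" "far l" and near: "\<And>i. i < l \<Longrightarrow> \<not> far i"
    using ex_least_nat_le by blast
  have "(\<Sum>i<l. dist (w i) (w (Suc i))) \<le> dist v (w l) / cos (2 * \<theta>)"
    unfolding \<theta>_def
  proof (rule cone_path_length_bound)
    show "dist v (w i) * (2 * cos (2 * pi / real k)) < dist u v" if "i < l" for i
      using near[OF that] cos_\<theta> unfolding far_def \<theta>_def
      by (simp add: not_le pos_less_divide_eq[of "2 * cos (2 * pi / real k)"])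
    show "in_cone k \<alpha> (w i) u (w (Suc i))" if "i < l" for i
      using bspec[OF assms(13), of "Suc i"] that \<open>l \<le> h\<close> by simp
  qed (use assms(4,8,11) \<open>l \<le> h\<close> in auto)
  with \<open>l \<le> h\<close> \<open>far l\<close> show ?thesis unfolding far_def by blast
qed

end
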